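(* Let $n$ be a prime with $n\equiv 1$ or $5\pmod 6$. Then there exists a one-factorization $\mathcal{R}$ of $K_{2n}$ on the vertex set $\{0,1,\dots,2n-1\}$ such that: (1) if $n\equiv 5\pmod 6$, then $\mathcal{R}=\{\mathcal{R}_{i,j}: 1\le i\le \frac{2n-1}{3},\ 1\le j\le 3\}$, where $\mathcal{R}_{i,1}\cup\mathcal{R}_{i,2}\cup\mathcal{R}_{i,3}=\mathcal{A}_i\cup\mathcal{B}_i\cup\mathcal{C}_{i-1}$ for $1\le i\le\frac{n-1}{2}$, and $\mathcal{R}_{i,1}=\mathcal{C}_{3i-n-2}$, $\mathcal{R}_{i,2}=\mathcal{C}_{3i-n-1}$, $\mathcal{R}_{i,3}=\mathcal{C}_{3i-n}$ for $\frac{n+1}{2}\le i\le\frac{2n-1}{3}$; (2) if $n\equiv 1\pmod 6$, then $\mathcal{R}=\{\mathcal{R}_{i,j}: 1\le i\le\frac{n-1}{2},\ 1\le j\le 3\}\cup\{\mathcal{C}_i:\frac{n-1}{2}\le i\le n-1\}$, where $\mathcal{R}_{i,1}\cup\mathcal{R}_{i,2}\cup\mathcal{R}_{i,3}=\mathcal{A}_i\cup\mathcal{B}_i\cup\mathcal{C}_{i-1}$ for $1\le i\le \frac{n-1}{2}$.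
   Context: For $1\le i\le \frac{n-1}{2}$: $\mathcal{A}_i=\{\{x,y\}: x,y\in\{0,\dots,n-1\},\ y-x\equiv i \pmod n\}$ and $\mathcal{B}_i=\{\{x,y\}: x,y\in\{n,\dots,2n-1\},\ y-x\equiv i\pmod n\}$. For $0\le i\le n-1$: $\mathcal{C}_i=\{\{x,y\}: 0\le x\le n-1,\ n\le y\le 2n-1,\ x+y\equiv i\pmod n\}$. A one-factor of $K_{2n}$ is a perfect matching; a one-factorization is a partition of the edge set of $K_{2n}$ into $2n-1$ one-factors. *)

theory Defs
  imports "HOL-Computational_Algebra.Primes" "HOL-Number_Theory.Cong" "HOL-Library.Disjoint_Sets"
begin

definition K_edges :: "nat \<Rightarrow> nat set set" where
  "K_edges n = {{x, y} | x y. x < 2*n \<and> y < 2*n \<and> x \<noteq> y}"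

definition A_set :: "nat \<Rightarrow> nat \<Rightarrow> nat set set" where
  "A_set n i = {{x, y} | x y. x \<le> n - 1 \<and> y \<le> n - 1 \<and> [int y - int x = int i] (mod int n)}"

definition B_set :: "nat \<Rightarrow> nat \<Rightarrow> nat set set" where
  "B_set n i = {{x, y} | x y. n \<le> x \<and> x \<le> 2*n - 1 \<and> n \<le> y \<and> y \<le> 2*n - 1
                           \<and> [int y - int x = int i] (mod int n)}"

definition C_set :: "nat \<Rightarrow> nat \<Rightarrow> nat set set" where
  "C_set n i = {{x, y} | x y. x \<le> n - 1 \<and> n \<le> y \<and> y \<le> 2*n - 1 \<and> [x + y = i] (mod n)}"

definition one_factor :: "nat \<Rightarrow> nat set set \<Rightarrow> bool" where
  "one_factor n M \<longleftrightarrow> M \<subseteq> K_edges n \<and> (\<forall>v < 2*n. \<exists>!e. e \<in> M \<and> v \<in> e)"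

definition one_factorization :: "nat \<Rightarrow> nat set set set \<Rightarrow> bool" where
  "one_factorization n F \<longleftrightarrow> partition_on (K_edges n) F \<and> card F = 2*n - 1
      \<and> (\<forall>M\<in>F. one_factor n M)"

end

theory Submission
  imports Defs
begin

text \<open>A one-factorization of K_{2n} amounts to 2n - 1 fixpoint-free involutions of the vertex set
  which together send every vertex to every other vertex. For 1 \<le> i \<le> (n - 1)/2 the 3-regular graph
  A_i \<union> B_i \<union> C_{i-1} is a relabelled prism C_n \<times> K_2: send top vertex t to t i and bottom vertex t
  to i - 1 - t i modulo n, which is a bijection because n is prime. Since n is odd the prism has an
  explicit 3-edge-colouring, giving three one-factors R_{i,1}, R_{i,2}, R_{i,3}. The remaining
  edges form the sum classes C_j, (n - 1)/2 \<le> j \<le> n - 1, each a perfect matching, and every edge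
  lies in some A_i, B_i or C_j; this gives 3(n - 1)/2 + (n + 1)/2 = 2n - 1 factors. For
  n \<equiv> 5 (mod 6) the C_j are merely regrouped in triples as R_{i,1}, R_{i,2}, R_{i,3}.\<close>

section \<open>Perfect matchings as fixpoint-free involutions\<close>

definition fixpoint_free_involution :: "nat \<Rightarrow> (nat \<Rightarrow> nat) \<Rightarrow> bool" where
  "fixpoint_free_involution n p \<longleftrightarrow> (\<forall>v<2*n. p v < 2*n \<and> p v \<noteq> v \<and> p (p v) = v)"

definition involution_matching :: "nat \<Rightarrow> (nat \<Rightarrow> nat) \<Rightarrow> nat set set" where
  "involution_matching n p = {{v, p v} | v. v < 2*n}"

lemma involution_matching_edge_at:
  assumes "fixpoint_free_involution n p" "v < 2*n" "e \<in> involution_matching n p" "v \<in> e"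
  shows "e = {v, p v}"
proof -
  obtain w where "w < 2*n" "e = {w, p w}"
    using assms(3) unfolding involution_matching_def by auto
  then show ?thesis
    using assms(1,4) unfolding fixpoint_free_involution_def by auto
qed

lemma involution_matching_partner:
  assumes "fixpoint_free_involution n p" "x < 2*n" "x \<noteq> y" "{x, y} \<in> involution_matching n p"
  shows "p x = y"
  using involution_matching_edge_at[OF assms(1,2,4)] assms(3) by (auto simp: doubleton_eq_iff)

lemma one_factor_involution_matching:
  assumes "fixpoint_free_involution n p"
  shows "one_factor n (involution_matching n p)"
  unfolding one_factor_def
proof (intro conjI allI impI)
  show "involution_matching n p \<subseteq> K_edges n"
    using assms unfolding involution_matching_def K_edges_def fixpoint_free_involution_def
    by fastforce
  fix v assume v: "v < 2*n"
  then have "{v, p v} \<in> involution_matching n p"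
    unfolding involution_matching_def by auto
  then show "\<exists>!e. e \<in> involution_matching n p \<and> v \<in> e"
    using involution_matching_edge_at[OF assms v] by auto
qed

text \<open>Counting at a vertex x: the 2n-1 involutions send x to the 2n-1 other vertices, so they
  do so bijectively, and two of the matchings can share no edge.\<close>

lemma one_factorization_of_involutions:
  assumes fin: "finite K" and card: "card K = 2*n - 1" and n: "0 < n"
    and inv: "\<And>k. k \<in> K \<Longrightarrow> fixpoint_free_involution n (p k)"
    and cover: "K_edges n \<subseteq> (\<Union>k\<in>K. involution_matching n (p k))"
  shows "one_factorization n ((\<lambda>k. involution_matching n (p k)) ` K)"
proof -
  let ?M = "\<lambda>k. involution_matching n (p k)"
  have partners: "(\<lambda>k. p k x) ` K = {..<2*n} - {x}" if x: "x < 2*n" for x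
  proof
    show "(\<lambda>k. p k x) ` K \<subseteq> {..<2*n} - {x}"
      using inv x unfolding fixpoint_free_involution_def by auto
    show "{..<2*n} - {x} \<subseteq> (\<lambda>k. p k x) ` K"
    proof
      fix y assume y: "y \<in> {..<2*n} - {x}"
      then have "{x, y} \<in> K_edges n" using x unfolding K_edges_def by auto
      then obtain k where "k \<in> K" "{x, y} \<in> ?M k" using cover by blast
      then show "y \<in> (\<lambda>k. p k x) ` K"
        using involution_matching_partner[OF inv] x y by fastforce
    qed
  qed
  have inj_at: "inj_on (\<lambda>k. p k x) K" if "x < 2*n" for x
    by (rule eq_card_imp_inj_on[OF fin]) (simp add: partners[OF that] card that)
  have same: "k = l" if "k \<in> K" "l \<in> K" "e \<in> ?M k" "e \<in> ?M l" for k l e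
  proof -
    obtain v where v: "v < 2*n" "e = {v, p k v}"
      using \<open>e \<in> ?M k\<close> unfolding involution_matching_def by auto
    then have "{v, p k v} = {v, p l v}"
      using involution_matching_edge_at[OF inv[OF that(2)] v(1) that(4)] by simp
    then have "p k v = p l v"
      using inv[OF that(1)] v(1) unfolding fixpoint_free_involution_def
      by (metis doubleton_eq_iff)
    then show ?thesis using inj_at[OF v(1)] that(1,2) by (auto dest: inj_onD)
  qed
  have nonempty: "{0, p k 0} \<in> ?M k" for k
    using n unfolding involution_matching_def by auto
  have inj: "inj_on ?M K"
    by (rule inj_onI) (use same nonempty in blast)
  have "\<Union> (?M ` K) = K_edges n"
    using cover one_factor_involution_matching[OF inv] unfolding one_factor_def by blast
  moreover have "disjoint (?M ` K)"
    unfolding disjoint_def using same by blast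
  ultimately show ?thesis
    unfolding one_factorization_def partition_on_def
    using nonempty one_factor_involution_matching[OF inv] card_image[OF inj] card by auto
qed

lemma
  fixes n :: nat and \<sigma> :: "nat \<Rightarrow> nat"
  defines "\<tau> \<equiv> inv_into {..<2*n} \<sigma>"
  assumes \<sigma>: "bij_betw \<sigma> {..<2*n} {..<2*n}" and p: "fixpoint_free_involution n p"
  shows fixpoint_free_involution_conjugate: "fixpoint_free_involution n (\<sigma> \<circ> p \<circ> \<tau>)"
    and involution_matching_conjugate:
      "involution_matching n (\<sigma> \<circ> p \<circ> \<tau>) = (`) \<sigma> ` involution_matching n p"
proof -
  have \<tau>: "\<tau> v < 2*n" "\<sigma> (\<tau> v) = v" if "v < 2*n" for v
    using that \<sigma> unfolding \<tau>_def
    by (metis bij_betw_imp_surj_on inv_into_into lessThan_iff, simp add: bij_betw_inv_into_right)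
  have \<tau>\<sigma>: "\<tau> (\<sigma> a) = a" if "a < 2*n" for a
    using that \<sigma> unfolding \<tau>_def by (simp add: bij_betw_inv_into_left)
  have p': "p a < 2*n" "p a \<noteq> a" "p (p a) = a" if "a < 2*n" for a
    using p that unfolding fixpoint_free_involution_def by auto
  have \<sigma>_lt: "\<sigma> a < 2*n" if "a < 2*n" for a
    using \<sigma> that by (auto dest: bij_betwE)
  have \<sigma>_inj: "\<sigma> a \<noteq> \<sigma> b" if "a < 2*n" "b < 2*n" "a \<noteq> b" for a b
    using \<sigma> that by (auto dest: bij_betw_imp_inj_on inj_onD)
  show "fixpoint_free_involution n (\<sigma> \<circ> p \<circ> \<tau>)"
    unfolding fixpoint_free_involution_def
    using \<tau> \<tau>\<sigma> p' \<sigma>_lt \<sigma>_inj by (metis comp_apply)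
  show "involution_matching n (\<sigma> \<circ> p \<circ> \<tau>) = (`) \<sigma> ` involution_matching n p"
  proof (intro equalityI subsetI)
    fix e assume "e \<in> involution_matching n (\<sigma> \<circ> p \<circ> \<tau>)"
    then obtain v where "v < 2*n" "e = {v, \<sigma> (p (\<tau> v))}"
      unfolding involution_matching_def by auto
    then have "\<tau> v < 2*n" "e = \<sigma> ` {\<tau> v, p (\<tau> v)}" using \<tau> by auto
    then show "e \<in> (`) \<sigma> ` involution_matching n p"
      unfolding involution_matching_def by blast
  next
    fix e assume "e \<in> (`) \<sigma> ` involution_matching n p"
    then obtain a where a: "a < 2*n" "e = {\<sigma> a, \<sigma> (p a)}"
      unfolding involution_matching_def by auto
    then have "e = {\<sigma> a, (\<sigma> \<circ> p \<circ> \<tau>) (\<sigma> a)}" "\<sigma> a < 2*n" using \<tau>\<sigma> \<sigma>_lt by auto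
    then show "e \<in> involution_matching n (\<sigma> \<circ> p \<circ> \<tau>)"
      unfolding involution_matching_def by blast
  qed
qed

section \<open>The prism and its 3-edge-colouring\<close>

text \<open>The prism has top vertices t and bottom vertices n + t for t < n. Colour c matches a vertex
  with its neighbour on the same n-cycle given by cycle_partner, or along the rung if there is none:
  colour 1 uses {0,1}, {2,3}, ..., {n-3,n-2} and the rung at n - 1, colour 2 uses {1,2}, ...,
  {n-2,n-1} and the rung at 0, colour 3 uses {n-1,0} and all other rungs.\<close>

definition cycle_partner :: "nat \<Rightarrow> nat \<Rightarrow> nat \<Rightarrow> nat option" where
  "cycle_partner n c t =
    (if c = 1 then (if t = n - 1 then None else if even t then Some (t + 1) else Some (t - 1))
     else if c = 2 then (if t = 0 then None else if odd t then Some (t + 1) else Some (t - 1))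
     else if t = n - 1 then Some 0 else if t = 0 then Some (n - 1) else None)"

definition prism_colouring :: "nat \<Rightarrow> nat \<Rightarrow> nat \<Rightarrow> nat" where
  "prism_colouring n c a =
    (if a < n then (case cycle_partner n c a of None \<Rightarrow> n + a | Some s \<Rightarrow> s)
     else (case cycle_partner n c (a - n) of None \<Rightarrow> a - n | Some s \<Rightarrow> n + s))"

definition prism_edges :: "nat \<Rightarrow> nat set set" where
  "prism_edges n = {{t, Suc t mod n} | t. t < n} \<union> {{n + t, n + Suc t mod n} | t. t < n}
                    \<union> {{t, n + t} | t. t < n}"

context
  fixes n :: nat
  assumes odd: "odd n" and three: "3 \<le> n"
begin

lemma cycle_partner_symmetric:
  assumes "c \<in> {1, 2, 3}" "t < n" "cycle_partner n c t = Some s"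
  shows "s < n \<and> s \<noteq> t \<and> cycle_partner n c s = Some t \<and> (s = Suc t mod n \<or> t = Suc s mod n)"
proof -
  have "c = 1 \<or> c = 2 \<or> c = 3" using assms(1) by auto
  moreover have "Suc t < n" if "odd t" using that odd assms(2) by presburger
  ultimately show ?thesis
    using assms(2,3) odd three unfolding cycle_partner_def
    by (elim disjE) (auto split: if_splits, presburger+)
qed

lemma cycle_partner_covers:
  assumes "t < n"
  shows "\<exists>c\<in>{1, 2, 3}. cycle_partner n c t = Some (Suc t mod n)"
    and "\<exists>c\<in>{1, 2, 3}. cycle_partner n c t = None"
proof -
  have "Suc t mod n = (if t = n - 1 then 0 else t + 1)"
    using assms by (auto simp: mod_Suc)
  then show "\<exists>c\<in>{1, 2, 3}. cycle_partner n c t = Some (Suc t mod n)"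
    using odd assms unfolding cycle_partner_def
    by (cases "t = n - 1"; cases "even t") (auto intro: bexI[of _ 1] bexI[of _ 2] bexI[of _ 3])
  show "\<exists>c\<in>{1, 2, 3}. cycle_partner n c t = None"
    unfolding cycle_partner_def
    by (cases "t = n - 1"; cases "t = 0") (auto intro: bexI[of _ 1] bexI[of _ 2] bexI[of _ 3])
qed

lemma fixpoint_free_involution_prism_colouring:
  assumes "c \<in> {1, 2, 3}"
  shows "fixpoint_free_involution n (prism_colouring n c)"
  unfolding fixpoint_free_involution_def
proof (intro allI impI)
  fix a assume a: "a < 2*n"
  show "prism_colouring n c a < 2*n \<and> prism_colouring n c a \<noteq> a
      \<and> prism_colouring n c (prism_colouring n c a) = a"
  proof (cases "a < n")
    case True
    show ?thesis
    proof (cases "cycle_partner n c a")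
      case (Some s)
      then show ?thesis
        using True cycle_partner_symmetric[OF assms True Some] by (simp add: prism_colouring_def)
    qed (use True in \<open>simp add: prism_colouring_def\<close>)
  next
    case False
    then have a': "a - n < n" using a by simp
    show ?thesis
    proof (cases "cycle_partner n c (a - n)")
      case (Some s)
      then show ?thesis
        using False cycle_partner_symmetric[OF assms a' Some] by (auto simp: prism_colouring_def)
    qed (use False a' in \<open>simp add: prism_colouring_def\<close>)
  qed
qed

lemma prism_colouring_edge:
  assumes c: "c \<in> {1, 2, 3}" and a: "a < 2*n"
  shows "{a, prism_colouring n c a} \<in> prism_edges n"
proof -
  let ?top = "{{t, Suc t mod n} | t. t < n}" and ?bottom = "{{n + t, n + Suc t mod n} | t. t < n}"
    and ?rungs = "{{t, n + t} | t. t < n}"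
  have cycle: "{t, s} \<in> ?top" if "t < n" "s < n" "s = Suc t mod n \<or> t = Suc s mod n" for t s
    using that by (auto simp: insert_commute)
  have shifted: "{n + t, n + s} \<in> ?bottom" if "t < n" "s < n" "s = Suc t mod n \<or> t = Suc s mod n"
    for t s
    using that by (auto simp: insert_commute)
  consider (top) "a < n" | (bottom) t where "t < n" "a = n + t"
    using a by (metis add_diff_inverse_nat add_less_imp_less_left mult_2)
  then show ?thesis
  proof cases
    case top
    show ?thesis
    proof (cases "cycle_partner n c a")
      case None
      then have "{a, prism_colouring n c a} \<in> ?rungs"
        using top by (auto simp: prism_colouring_def)
      then show ?thesis unfolding prism_edges_def by blast
    next
      case (Some s)
      then show ?thesis
        using cycle[of a s] cycle_partner_symmetric[OF c top Some] top
        unfolding prism_edges_def prism_colouring_def by simp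
    qed
  next
    case bottom
    show ?thesis
    proof (cases "cycle_partner n c t")
      case None
      then have "{a, prism_colouring n c a} \<in> ?rungs"
        using bottom by (auto simp: prism_colouring_def insert_commute)
      then show ?thesis unfolding prism_edges_def by blast
    next
      case (Some s)
      then show ?thesis
        using shifted[of t s] cycle_partner_symmetric[OF c bottom(1) Some] bottom
        unfolding prism_edges_def prism_colouring_def by simp
    qed
  qed
qed

lemma prism_colouring_edges:
  "(\<Union>c\<in>{1, 2, 3}. involution_matching n (prism_colouring n c)) = prism_edges n"
proof (intro equalityI subsetI)
  fix e assume "e \<in> (\<Union>c\<in>{1, 2, 3}. involution_matching n (prism_colouring n c))"
  then show "e \<in> prism_edges n"
    unfolding involution_matching_def using prism_colouring_edge by blast
next
  fix e assume "e \<in> prism_edges n"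
  then show "e \<in> (\<Union>c\<in>{1, 2, 3}. involution_matching n (prism_colouring n c))"
    unfolding prism_edges_def involution_matching_def
  proof (elim UnE CollectE exE conjE)
    fix t assume t: "t < n" and e: "e = {t, Suc t mod n}"
    then obtain c where "c \<in> {1, 2, 3}" "prism_colouring n c t = Suc t mod n"
      using cycle_partner_covers(1)[OF t] unfolding prism_colouring_def by force
    then show "e \<in> (\<Union>c\<in>{1, 2, 3}. {{v, prism_colouring n c v} |v. v < 2*n})"
      using e t by force
  next
    fix t assume t: "t < n" and e: "e = {n + t, n + Suc t mod n}"
    then obtain c where "c \<in> {1, 2, 3}" "prism_colouring n c (n + t) = n + Suc t mod n"
      using cycle_partner_covers(1)[OF t] unfolding prism_colouring_def by force
    then show "e \<in> (\<Union>c\<in>{1, 2, 3}. {{v, prism_colouring n c v} |v. v < 2*n})"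
      using e t by force
  next
    fix t assume t: "t < n" and e: "e = {t, n + t}"
    then obtain c where "c \<in> {1, 2, 3}" "prism_colouring n c t = n + t"
      using cycle_partner_covers(2)[OF t] unfolding prism_colouring_def by force
    then show "e \<in> (\<Union>c\<in>{1, 2, 3}. {{v, prism_colouring n c v} |v. v < 2*n})"
      using e t by force
  qed
qed

end

section \<open>Relabelling the prism onto a difference class\<close>

definition residue :: "nat \<Rightarrow> int \<Rightarrow> nat" where
  "residue n z = nat (z mod int n)"

lemma residue_less: "0 < n \<Longrightarrow> residue n z < n"
  unfolding residue_def by (simp add: nat_less_iff)

lemma cong_residue: "0 < n \<Longrightarrow> [int (residue n z) = z] (mod int n)"
  unfolding residue_def by (simp add: cong_def)

text \<open>Top vertex t goes to t i and bottom vertex n + t to n + (i - 1 - t i), modulo n: top cycle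
  edges then have difference i, bottom cycle edges difference -i, and rungs sum i - 1.\<close>

definition prism_relabelling :: "nat \<Rightarrow> nat \<Rightarrow> nat \<Rightarrow> nat" where
  "prism_relabelling n i a =
    (if a < n then residue n (int a * int i) else n + residue n (int i - 1 - int (a - n) * int i))"

lemma eq_if_cong_same_half:
  assumes "x < 2*n" "y < 2*n" "x < n \<longleftrightarrow> y < n" "[int x = int y] (mod int n)"
  shows "x = y"
proof (cases "x < n")
  case True
  then show ?thesis
    using assms cong_less_imp_eq_int[of "int x" "int n" "int y"] by simp
next
  case False
  have "[int x - int n = int y - int n] (mod int n)"
    using assms(4) by (rule cong_diff[OF _ cong_refl])
  then have "[int (x - n) = int (y - n)] (mod int n)"
    using False assms(3) by (simp add: of_nat_diff)
  then have "x - n = y - n"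
    using assms False cong_less_imp_eq_int[of "int (x - n)" "int n" "int (y - n)"] by simp
  then show ?thesis using False assms(3) by simp
qed

lemma cong_Suc_mod: "[int (Suc t mod n) = int t + 1] (mod int n)"
  by (simp add: cong_def of_nat_mod ac_simps)

lemma cong_diff_iff_cong_add: "[b - a = c] (mod m) \<longleftrightarrow> [b = a + c] (mod m)" for a b c m :: int
  by (metis add.commute cong_add_rcancel diff_add_cancel)

context
  fixes n i :: nat
  assumes n: "0 < n" and coprime: "coprime i n" and i: "1 \<le> i"
begin

abbreviation \<sigma> where "\<sigma> \<equiv> prism_relabelling n i"

lemma prism_relabelling_less_iff: "\<sigma> a < n \<longleftrightarrow> a < n"
  unfolding prism_relabelling_def using residue_less[OF n] by auto

lemma prism_relabelling_less: "a < 2*n \<Longrightarrow> \<sigma> a < 2*n"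
  unfolding prism_relabelling_def using residue_less[OF n] by (auto simp: mult_2 intro: trans_less_add1)

lemma prism_relabelling_top_bound: "t < n \<Longrightarrow> \<sigma> t \<le> n - 1"
  using prism_relabelling_less_iff[of t] by simp

lemma prism_relabelling_bottom_bounds: "t < n \<Longrightarrow> n \<le> \<sigma> (n + t) \<and> \<sigma> (n + t) \<le> 2*n - 1"
  using prism_relabelling_less_iff[of "n + t"] prism_relabelling_less[of "n + t"] by simp

lemma cong_prism_relabelling_top: "t < n \<Longrightarrow> [int (\<sigma> t) = int t * int i] (mod int n)"
  unfolding prism_relabelling_def using cong_residue[OF n] by simp

lemma cong_prism_relabelling_bottom: "[int (\<sigma> (n + t)) = int i - 1 - int t * int i] (mod int n)"
  unfolding prism_relabelling_def using cong_residue[OF n]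
  by (simp add: cong_def mod_add_left_eq[symmetric])

lemma bij_betw_prism_relabelling: "bij_betw \<sigma> {..<2*n} {..<2*n}"
proof -
  have ci: "coprime (int i) (int n)" using coprime by simp
  have "inj_on \<sigma> {..<2*n}"
  proof (rule inj_onI)
    fix a b assume a: "a \<in> {..<2*n}" and b: "b \<in> {..<2*n}" and eq: "\<sigma> a = \<sigma> b"
    then have half: "a < n \<longleftrightarrow> b < n" using prism_relabelling_less_iff by metis
    show "a = b"
    proof (cases "a < n")
      case True
      have "[int a * int i = int b * int i] (mod int n)"
        using cong_prism_relabelling_top[of a] cong_prism_relabelling_top[of b] eq True half
        by (metis cong_sym cong_trans)
      then show ?thesis
        using a b half by (intro eq_if_cong_same_half) (auto simp: cong_mult_rcancel[OF ci])
    next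
      case False
      obtain s t where st: "a = n + s" "b = n + t"
        using False half by (metis le_add_diff_inverse not_less)
      have "[int i - 1 - int s * int i = int i - 1 - int t * int i] (mod int n)"
        using cong_prism_relabelling_bottom[of s] cong_prism_relabelling_bottom[of t] eq st
        by (metis cong_sym cong_trans)
      then have "[int s * int i = int t * int i] (mod int n)"
        by (simp only: diff_conv_add_uminus cong_add_lcancel cong_minus_minus_iff)
      then have "[int a = int b] (mod int n)"
        using st by (simp add: cong_mult_rcancel[OF ci] cong_add_lcancel)
      then show ?thesis using a b half by (intro eq_if_cong_same_half) auto
    qed
  qed
  moreover have "\<sigma> ` {..<2*n} \<subseteq> {..<2*n}" using prism_relabelling_less by auto
  ultimately show ?thesis
    by (simp add: bij_betw_def endo_inj_surj)
qed

lemma prism_relabelling_onto: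
  assumes "a < 2*n"
  shows "\<exists>b<2*n. a = \<sigma> b"
  using assms bij_betw_prism_relabelling by (metis bij_betw_imp_surj_on imageE lessThan_iff)

lemma prism_relabelling_onto_top:
  assumes "x < n"
  shows "\<exists>t<n. x = \<sigma> t"
proof -
  obtain b where "b < 2*n" "x = \<sigma> b" using prism_relabelling_onto[of x] assms by auto
  then show ?thesis using assms prism_relabelling_less_iff[of b] by auto
qed

lemma prism_relabelling_onto_bottom:
  assumes "n \<le> y" "y < 2*n"
  shows "\<exists>t<n. y = \<sigma> (n + t)"
proof -
  obtain b where b: "b < 2*n" "y = \<sigma> b" using prism_relabelling_onto[OF assms(2)] by auto
  then have "n \<le> b" using assms(1) prism_relabelling_less_iff[of b] by auto
  then show ?thesis using b by (intro exI[of _ "b - n"]) auto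
qed

lemma cong_prism_relabelling_top_step:
  assumes "t < n"
  shows "[int (\<sigma> (Suc t mod n)) = int (\<sigma> t) + int i] (mod int n)"
proof -
  have "[int (\<sigma> (Suc t mod n)) = (int t + 1) * int i] (mod int n)"
    using cong_prism_relabelling_top[of "Suc t mod n"] n
    by (simp add: cong_trans[OF _ cong_scalar_right[OF cong_Suc_mod]])
  also have "(int t + 1) * int i = int t * int i + int i"
    by (simp add: algebra_simps)
  also have "[\<dots> = int (\<sigma> t) + int i] (mod int n)"
    by (intro cong_add cong_refl cong_sym[OF cong_prism_relabelling_top] assms)
  finally show ?thesis .
qed

lemma cong_prism_relabelling_bottom_step:
  "[int (\<sigma> (n + t)) = int (\<sigma> (n + Suc t mod n)) + int i] (mod int n)"
proof -
  have "[int (\<sigma> (n + Suc t mod n)) = int i - 1 - (int t + 1) * int i] (mod int n)"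
    using cong_prism_relabelling_bottom[of "Suc t mod n"]
    by (rule cong_trans) (intro cong_diff cong_refl cong_scalar_right cong_Suc_mod)
  then have "[int (\<sigma> (n + Suc t mod n)) + int i = (int i - 1 - (int t + 1) * int i) + int i] (mod int n)"
    by (rule cong_add[OF _ cong_refl])
  also have "(int i - 1 - (int t + 1) * int i) + int i = int i - 1 - int t * int i"
    by (simp add: algebra_simps)
  also have "[\<dots> = int (\<sigma> (n + t))] (mod int n)"
    by (rule cong_sym[OF cong_prism_relabelling_bottom])
  finally show ?thesis by (rule cong_sym)
qed

lemma cong_prism_relabelling_rung:
  "t < n \<Longrightarrow> [int (\<sigma> t) + int (\<sigma> (n + t)) = int i - 1] (mod int n)"
  using cong_add[OF cong_prism_relabelling_top cong_prism_relabelling_bottom, of t t] by simp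

lemma prism_relabelling_top_edges: "{{\<sigma> t, \<sigma> (Suc t mod n)} | t. t < n} = A_set n i"
proof (intro equalityI subsetI)
  fix e assume "e \<in> {{\<sigma> t, \<sigma> (Suc t mod n)} | t. t < n}"
  then obtain t where t: "t < n" "e = {\<sigma> t, \<sigma> (Suc t mod n)}" by blast
  have "[int (\<sigma> (Suc t mod n)) - int (\<sigma> t) = int i] (mod int n)"
    using cong_prism_relabelling_top_step[OF t(1)] by (simp add: cong_diff_iff_cong_add)
  moreover have "Suc t mod n < n" using n by simp
  ultimately show "e \<in> A_set n i"
    unfolding A_set_def t(2) using prism_relabelling_top_bound t(1) by blast
next
  fix e assume "e \<in> A_set n i"
  then obtain x y where e: "e = {x, y}" and xy: "x < n" "y < n"
    and cong: "[int y = int x + int i] (mod int n)"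
    unfolding A_set_def using n by (auto simp: cong_diff_iff_cong_add)
  obtain t where t: "t < n" "x = \<sigma> t"
    using prism_relabelling_onto_top[OF xy(1)] by blast
  have "[int (\<sigma> (Suc t mod n)) = int y] (mod int n)"
    using cong_trans[OF cong_prism_relabelling_top_step[OF t(1)] cong_sym[OF cong[unfolded t(2)]]] .
  then have "y = \<sigma> (Suc t mod n)"
    using xy n prism_relabelling_less_iff[of "Suc t mod n"]
    by (intro eq_if_cong_same_half[symmetric]) auto
  then have "e = {\<sigma> t, \<sigma> (Suc t mod n)}"
    unfolding e t(2) by simp
  then show "e \<in> {{\<sigma> t, \<sigma> (Suc t mod n)} | t. t < n}"
    using t(1) by blast
qed

lemma prism_relabelling_bottom_edges:
  "{{\<sigma> (n + t), \<sigma> (n + Suc t mod n)} | t. t < n} = B_set n i"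
proof (intro equalityI subsetI)
  fix e assume "e \<in> {{\<sigma> (n + t), \<sigma> (n + Suc t mod n)} | t. t < n}"
  then obtain t where t: "t < n" "e = {\<sigma> (n + t), \<sigma> (n + Suc t mod n)}"
    by blast
  have "[int (\<sigma> (n + t)) - int (\<sigma> (n + Suc t mod n)) = int i] (mod int n)"
    using cong_prism_relabelling_bottom_step[of t] by (simp add: cong_diff_iff_cong_add)
  moreover have "Suc t mod n < n" using n by simp
  ultimately show "e \<in> B_set n i"
    unfolding B_set_def t(2) insert_commute[of "\<sigma> (n + t)"]
    using prism_relabelling_bottom_bounds t(1) by blast
next
  fix e assume "e \<in> B_set n i"
  then obtain x y where e: "e = {x, y}" and xy: "n \<le> x" "x < 2*n" "n \<le> y" "y < 2*n"
    and cong: "[int y = int x + int i] (mod int n)"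
    unfolding B_set_def using n by (auto simp: cong_diff_iff_cong_add)
  obtain t where t: "t < n" "y = \<sigma> (n + t)"
    using prism_relabelling_onto_bottom[OF xy(3,4)] by blast
  have "[int (\<sigma> (n + Suc t mod n)) + int i = int x + int i] (mod int n)"
    using cong_trans[OF cong_sym[OF cong_prism_relabelling_bottom_step[of t]] cong[unfolded t(2)]] .
  then have "[int (\<sigma> (n + Suc t mod n)) = int x] (mod int n)"
    by (simp add: cong_add_rcancel)
  then have "x = \<sigma> (n + Suc t mod n)"
    using xy prism_relabelling_less_iff[of "n + Suc t mod n"] prism_relabelling_less[of "n + Suc t mod n"] n
    by (intro eq_if_cong_same_half[symmetric]) auto
  then have "e = {\<sigma> (n + t), \<sigma> (n + Suc t mod n)}"
    unfolding e t(2) by (simp add: insert_commute)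
  then show "e \<in> {{\<sigma> (n + t), \<sigma> (n + Suc t mod n)} | t. t < n}"
    using t(1) by blast
qed


lemma prism_relabelling_rung_edges: "{{\<sigma> t, \<sigma> (n + t)} | t. t < n} = C_set n (i - 1)"
proof -
  have int_cong: "[x + y = i - 1] (mod n) \<longleftrightarrow> [int x + int y = int i - 1] (mod int n)" for x y
    using i by (simp add: cong_int_iff[symmetric] of_nat_diff)
  show ?thesis
  proof (intro equalityI subsetI)
    fix e assume "e \<in> {{\<sigma> t, \<sigma> (n + t)} | t. t < n}"
    then obtain t where t: "t < n" "e = {\<sigma> t, \<sigma> (n + t)}" by blast
    then have "[\<sigma> t + \<sigma> (n + t) = i - 1] (mod n)"
      using cong_prism_relabelling_rung int_cong by simp
    then show "e \<in> C_set n (i - 1)"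
      unfolding C_set_def t(2)
      using prism_relabelling_top_bound prism_relabelling_bottom_bounds t(1) by blast
  next
    fix e assume "e \<in> C_set n (i - 1)"
    then obtain x y where e: "e = {x, y}" and xy: "x < n" "n \<le> y" "y < 2*n"
      and cong: "[int x + int y = int i - 1] (mod int n)"
      unfolding C_set_def using n int_cong by auto
    obtain t where t: "t < n" "x = \<sigma> t"
      using prism_relabelling_onto_top[OF xy(1)] by blast
    have "[int x + int (\<sigma> (n + t)) = int x + int y] (mod int n)"
      using cong_trans[OF cong_prism_relabelling_rung[OF t(1)] cong_sym[OF cong]] t(2) by simp
    then have "y = \<sigma> (n + t)"
      using xy prism_relabelling_bottom_bounds[OF t(1)]
      by (intro eq_if_cong_same_half) (auto simp: cong_add_lcancel cong_sym_eq)
    then have "e = {\<sigma> t, \<sigma> (n + t)}"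
      unfolding e t(2) by simp
    then show "e \<in> {{\<sigma> t, \<sigma> (n + t)} | t. t < n}"
      using t(1) by blast
  qed
qed

lemma image_doubletons: "(`) f ` {{a t, b t} | t. P t} = {{f (a t), f (b t)} | t. P t}"
proof (intro equalityI subsetI)
  fix e assume "e \<in> {{f (a t), f (b t)} | t. P t}"
  then obtain t where "P t" "e = {f (a t), f (b t)}" by blast
  then show "e \<in> (`) f ` {{a t, b t} | t. P t}"
    by (intro image_eqI[of _ _ "{a t, b t}"]) auto
qed auto

lemma prism_relabelling_prism_edges:
  "(`) \<sigma> ` prism_edges n = A_set n i \<union> B_set n i \<union> C_set n (i - 1)"
  unfolding prism_edges_def image_Un image_doubletons prism_relabelling_top_edges
    prism_relabelling_bottom_edges prism_relabelling_rung_edges ..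

end

section \<open>The sum classes\<close>

definition sum_class_involution :: "nat \<Rightarrow> nat \<Rightarrow> nat \<Rightarrow> nat" where
  "sum_class_involution n j v =
    (if v < n then n + residue n (int j - int v) else residue n (int j - int (v - n)))"

lemma cong_sum_class_involution:
  assumes "0 < n" "v < 2*n"
  shows "[int v + int (sum_class_involution n j v) = int j] (mod int n)"
  using assms unfolding sum_class_involution_def cong_def
  by (auto simp: residue_def mod_simps of_nat_diff add.left_commute[of "int v" "int n"])
lemma sum_class_involution_opposite_half:
  assumes "0 < n" "v < 2*n"
  shows "sum_class_involution n j v < 2*n \<and> (sum_class_involution n j v < n \<longleftrightarrow> \<not> v < n)"
proof -
  have "residue n z < n" "residue n z < 2*n" for z
    using residue_less[OF assms(1), of z] by linarith+
  then show ?thesis using assms unfolding sum_class_involution_def by auto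
qed

lemma fixpoint_free_involution_sum_class:
  assumes n: "0 < n"
  shows "fixpoint_free_involution n (sum_class_involution n j)"
  unfolding fixpoint_free_involution_def
proof (intro allI impI)
  fix v assume v: "v < 2*n"
  let ?p = "sum_class_involution n j"
  have p: "?p v < 2*n" "?p v < n \<longleftrightarrow> \<not> v < n"
    using sum_class_involution_opposite_half[OF n v] by auto
  have pp: "?p (?p v) < 2*n" "?p (?p v) < n \<longleftrightarrow> v < n"
    using sum_class_involution_opposite_half[OF n p(1)] p(2) by auto
  have "[int (?p v) + int (?p (?p v)) = int (?p v) + int v] (mod int n)"
    using cong_sum_class_involution[OF n p(1)] cong_sum_class_involution[OF n v]
    by (metis add.commute cong_sym cong_trans)
  then have "?p (?p v) = v"
    using pp v by (intro eq_if_cong_same_half) (auto simp: cong_add_lcancel)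
  moreover have "?p v \<noteq> v" using p(2) by auto
  ultimately show "?p v < 2*n \<and> ?p v \<noteq> v \<and> ?p (?p v) = v" using p(1) by blast
qed

lemma involution_matching_sum_class:
  assumes n: "0 < n"
  shows "involution_matching n (sum_class_involution n j) = C_set n j"
proof (intro equalityI subsetI)
  let ?p = "sum_class_involution n j"
  fix e assume "e \<in> involution_matching n ?p"
  then obtain v where v: "v < 2*n" "e = {v, ?p v}"
    unfolding involution_matching_def by blast
  have cong: "[v + ?p v = j] (mod n)"
    using cong_sum_class_involution[OF n v(1)] by (simp add: cong_int_iff[symmetric])
  have half: "?p v < 2*n" "?p v < n \<longleftrightarrow> \<not> v < n"
    using sum_class_involution_opposite_half[OF n v(1)] by auto
  show "e \<in> C_set n j"
  proof (cases "v < n")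
    case True
    then show ?thesis
      unfolding C_set_def v(2) using cong half v(1) by fastforce
  next
    case False
    then have "e = {?p v, v}" "[?p v + v = j] (mod n)"
      using v(2) cong by (auto simp: ac_simps)
    then show ?thesis
      unfolding C_set_def using False half v(1) by fastforce
  qed
next
  let ?p = "sum_class_involution n j"
  fix e assume "e \<in> C_set n j"
  then obtain x y where e: "e = {x, y}" and xy: "x < n" "n \<le> y" "y < 2*n"
    and cong: "[int x + int y = int j] (mod int n)"
    unfolding C_set_def using n by (auto simp: cong_int_iff[symmetric])
  have half: "?p x < 2*n" "\<not> ?p x < n"
    using sum_class_involution_opposite_half[of n x j] n xy by auto
  have "[int x + int (?p x) = int x + int y] (mod int n)"
    using cong_trans[OF cong_sum_class_involution cong_sym[OF cong]] n xy by simp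
  then have "?p x = y"
    using half xy by (intro eq_if_cong_same_half) (auto simp: cong_add_lcancel)
  then show "e \<in> involution_matching n ?p"
    unfolding involution_matching_def e using xy by auto
qed

section \<open>Covering the edges of K_{2n}\<close>

lemma difference_representative:
  assumes "odd n" "x < n" "y < n" "x \<noteq> y"
  obtains d where "1 \<le> d" "d \<le> (n - 1) div 2"
    "[int y - int x = int d] (mod int n) \<or> [int x - int y = int d] (mod int n)"
proof -
  have n: "0 < n" using assms(2) by simp
  define r where "r = residue n (int y - int x)"
  have r: "r < n" "[int y - int x = int r] (mod int n)"
    unfolding r_def using residue_less[OF n] cong_sym[OF cong_residue[OF n]] by auto
  have "r \<noteq> 0"
  proof
    assume "r = 0"
    then have "[int y = int x] (mod int n)" using r(2) by (simp add: cong_diff_iff_cong_add)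
    then show False using assms(2-4) cong_less_imp_eq_int[of "int y" "int n" "int x"] by simp
  qed
  show ?thesis
  proof (cases "r \<le> (n - 1) div 2")
    case True
    then show ?thesis using r(2) \<open>r \<noteq> 0\<close> by (intro that[of r]) auto
  next
    case False
    have "[int x - int y = - int r] (mod int n)"
      using r(2) by (metis cong_minus_minus_iff minus_diff_eq)
    also have "[- int r = int (n - r)] (mod int n)"
      using r(1) by (simp add: cong_def of_nat_diff)
    finally show ?thesis
      using False r(1) assms(1) by (intro that[of "n - r"]) (auto elim!: oddE)
  qed
qed

lemma doubleton_in_A_set:
  assumes "x < n" "y < n" "[int y - int x = int d] (mod int n) \<or> [int x - int y = int d] (mod int n)"
  shows "{x, y} \<in> A_set n d"
proof -
  have le: "x \<le> n - 1" "y \<le> n - 1" using assms(1,2) by auto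
  from assms(3) show ?thesis
  proof
    assume "[int y - int x = int d] (mod int n)"
    then show ?thesis unfolding A_set_def using le by blast
  next
    assume "[int x - int y = int d] (mod int n)"
    then have "{y, x} \<in> A_set n d" unfolding A_set_def using le by blast
    then show ?thesis by (simp add: insert_commute)
  qed
qed

lemma doubleton_in_B_set:
  assumes "n \<le> x" "x < 2*n" "n \<le> y" "y < 2*n"
    "[int y - int x = int d] (mod int n) \<or> [int x - int y = int d] (mod int n)"
  shows "{x, y} \<in> B_set n d"
proof -
  have le: "x \<le> 2*n - 1" "y \<le> 2*n - 1" using assms(2,4) by auto
  from assms(5) show ?thesis
  proof
    assume "[int y - int x = int d] (mod int n)"
    then show ?thesis unfolding B_set_def using le assms(1,3) by blast
  next
    assume "[int x - int y = int d] (mod int n)"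
    then have "{y, x} \<in> B_set n d" unfolding B_set_def using le assms(1,3) by blast
    then show ?thesis by (simp add: insert_commute)
  qed
qed

lemma K_edges_subset_classes:
  assumes "odd n"
  shows "K_edges n \<subseteq> (\<Union>d\<in>{1..(n - 1) div 2}. A_set n d \<union> B_set n d) \<union> (\<Union>j<n. C_set n j)"
proof
  fix e assume "e \<in> K_edges n"
  then obtain a b where ab: "e = {a, b}" "a < 2*n" "b < 2*n" "a \<noteq> b"
    unfolding K_edges_def by blast
  define x y where "x = min a b" and "y = max a b"
  have e: "e = {x, y}" and xy: "x < 2*n" "y < 2*n" "x < y"
    using ab unfolding x_def y_def by (auto simp: min_def max_def insert_commute)
  have n: "0 < n" using xy by simp
  consider (top) "y < n" | (rung) "x < n" "n \<le> y" | (bottom) "n \<le> x"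
    using xy(3) by linarith
  then show "e \<in> (\<Union>d\<in>{1..(n - 1) div 2}. A_set n d \<union> B_set n d) \<union> (\<Union>j<n. C_set n j)"
  proof cases
    case top
    obtain d where d: "1 \<le> d" "d \<le> (n - 1) div 2"
      "[int y - int x = int d] (mod int n) \<or> [int x - int y = int d] (mod int n)"
      by (rule difference_representative[OF assms, of x y]) (use top xy(3) in auto)
    then have "e \<in> A_set n d"
      unfolding e using top xy(3) by (intro doubleton_in_A_set) auto
    then show ?thesis using d(1,2) by auto
  next
    case rung
    moreover have "x \<le> n - 1" "y \<le> 2*n - 1" "[x + y = (x + y) mod n] (mod n)"
      using rung xy by (auto simp: cong_def)
    ultimately have "e \<in> C_set n ((x + y) mod n)"
      unfolding C_set_def e by blast
    then show ?thesis using n by auto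
  next
    case bottom
    have shift: "int (y - n) - int (x - n) = int y - int x" "int (x - n) - int (y - n) = int x - int y"
      using bottom xy(3) by auto
    obtain d where d: "1 \<le> d" "d \<le> (n - 1) div 2"
      "[int y - int x = int d] (mod int n) \<or> [int x - int y = int d] (mod int n)"
      unfolding shift[symmetric]
      by (rule difference_representative[OF assms, of "x - n" "y - n"]) (use bottom xy in auto)
    then have "e \<in> B_set n d"
      unfolding e using bottom xy by (intro doubleton_in_B_set) auto
    then show ?thesis using d(1,2) by auto
  qed
qed

lemma odd_prime_ge_three: "prime n \<Longrightarrow> odd n \<Longrightarrow> 3 \<le> (n::nat)"
  using prime_ge_2_nat[of n] by presburger

lemma coprime_below_prime:
  fixes n i :: nat
  assumes "prime n" "1 \<le> i" "i < n"
  shows "coprime i n"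
proof -
  have "\<not> n dvd i" using assms(2,3) by (auto dest: dvd_imp_le)
  then show ?thesis using prime_imp_coprime[OF assms(1)] by (simp add: coprime_commute)
qed

definition difference_involution :: "nat \<Rightarrow> nat \<Rightarrow> nat \<Rightarrow> nat \<Rightarrow> nat" where
  "difference_involution n i c =
    prism_relabelling n i \<circ> prism_colouring n c \<circ> inv_into {..<2*n} (prism_relabelling n i)"

definition difference_factor :: "nat \<Rightarrow> nat \<Rightarrow> nat \<Rightarrow> nat set set" where
  "difference_factor n i c = involution_matching n (difference_involution n i c)"

context
  fixes n i :: nat
  assumes odd: "odd n" and three: "3 \<le> n" and coprime: "coprime i n" and i: "1 \<le> i"
begin

lemma fixpoint_free_involution_difference:
  "c \<in> {1, 2, 3} \<Longrightarrow> fixpoint_free_involution n (difference_involution n i c)"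
  unfolding difference_involution_def using three coprime i
  by (intro fixpoint_free_involution_conjugate bij_betw_prism_relabelling
      fixpoint_free_involution_prism_colouring odd) auto

lemma difference_factors_union:
  "(\<Union>c\<in>{1, 2, 3}. difference_factor n i c) = A_set n i \<union> B_set n i \<union> C_set n (i - 1)"
proof -
  have n: "0 < n" using three by simp
  have "(\<Union>c\<in>{1, 2, 3}. difference_factor n i c)
      = (\<Union>c\<in>{1, 2, 3}. (`) (prism_relabelling n i) ` involution_matching n (prism_colouring n c))"
    unfolding difference_factor_def difference_involution_def
    using involution_matching_conjugate[OF bij_betw_prism_relabelling[OF n coprime i]
        fixpoint_free_involution_prism_colouring[OF odd three]]
    by simp
  also have "\<dots> = (`) (prism_relabelling n i) ` prism_edges n"
    unfolding prism_colouring_edges[OF odd three, symmetric] image_UN ..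
  also have "\<dots> = A_set n i \<union> B_set n i \<union> C_set n (i - 1)"
    by (rule prism_relabelling_prism_edges[OF n coprime i])
  finally show ?thesis .
qed

end

lemma prime_difference_factors_union:
  assumes "prime n" "odd n" "1 \<le> i" "i \<le> (n - 1) div 2"
  shows "difference_factor n i 1 \<union> difference_factor n i 2 \<union> difference_factor n i 3
    = A_set n i \<union> B_set n i \<union> C_set n (i - 1)"
proof -
  have "coprime i n" using assms(3,4) by (intro coprime_below_prime[OF assms(1)]) auto
  then show ?thesis
    using difference_factors_union[OF assms(2) odd_prime_ge_three[OF assms(1,2)] _ assms(3)]
    by (simp add: Un_assoc)
qed

lemma card_factor_indices:
  fixes n :: nat
  assumes "odd n"
  shows "card (({1..(n - 1) div 2} \<times> {1..3::nat}) <+> {(n - 1) div 2..n - 1}) = 2*n - 1"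
proof -
  have "n = 2 * ((n - 1) div 2) + 1" using assms by presburger
  moreover have "card (({1..(n - 1) div 2} \<times> {1..3::nat}) <+> {(n - 1) div 2..n - 1})
      = (n - 1) div 2 * 3 + (n - (n - 1) div 2)"
    using assms by (simp add: card_Plus card_cartesian_product)
  ultimately show ?thesis by linarith
qed

lemma K_edges_subset_factors:
  fixes n :: nat
  assumes prime: "prime n" and odd: "odd n"
  shows "K_edges n \<subseteq> \<Union> ({difference_factor n i c | i c. 1 \<le> i \<and> i \<le> (n - 1) div 2 \<and> 1 \<le> c \<and> c \<le> 3}
     \<union> {C_set n j | j. (n - 1) div 2 \<le> j \<and> j \<le> n - 1})"
    (is "_ \<subseteq> \<Union> (?D \<union> ?C)")
proof -
  note coprime = coprime_below_prime[OF prime]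
  have three: "3 \<le> n" using odd_prime_ge_three[OF prime odd] .
  have difference: "A_set n d \<union> B_set n d \<union> C_set n (d - 1) \<subseteq> \<Union> (?D \<union> ?C)"
    if d: "1 \<le> d" "d \<le> (n - 1) div 2" for d
  proof -
    have factor: "difference_factor n d c \<in> ?D" if "c \<in> {1, 2, 3}" for c
    proof -
      have "1 \<le> c" "c \<le> 3" using that by auto
      then show ?thesis using d by blast
    qed
    have "coprime d n" using d by (intro coprime) auto
    then have "A_set n d \<union> B_set n d \<union> C_set n (d - 1) = (\<Union>c\<in>{1, 2, 3}. difference_factor n d c)"
      by (rule sym[OF difference_factors_union[OF odd three _ d(1)]])
    also have "\<dots> \<subseteq> \<Union> (?D \<union> ?C)"
      by (intro UN_least Union_upper UnI1 factor)
    finally show ?thesis .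
  qed
  have differences: "A_set n d \<union> B_set n d \<subseteq> \<Union> (?D \<union> ?C)"
    if "d \<in> {1..(n - 1) div 2}" for d
    using difference[of d] that by auto
  have sums: "C_set n j \<subseteq> \<Union> (?D \<union> ?C)" if "j \<in> {..<n}" for j
  proof (cases "j < (n - 1) div 2")
    case True
    then show ?thesis using difference[of "j + 1"] by simp
  next
    case False
    then have "(n - 1) div 2 \<le> j" "j \<le> n - 1" using that by auto
    then have "C_set n j \<in> ?C" by (intro CollectI exI[of _ j]) simp
    then show ?thesis by (intro Union_upper UnI2)
  qed
  show ?thesis
    using K_edges_subset_classes[OF odd] UN_least[of _ _ "\<Union> (?D \<union> ?C)", OF differences]
      UN_least[of _ _ "\<Union> (?D \<union> ?C)", OF sums]
    by (rule subset_trans[OF _ Un_least])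
qed

lemma one_factorization_difference_and_sum_factors:
  fixes n :: nat
  assumes prime: "prime n" and odd: "odd n"
  shows "one_factorization n
    ({difference_factor n i c | i c. 1 \<le> i \<and> i \<le> (n - 1) div 2 \<and> 1 \<le> c \<and> c \<le> 3}
     \<union> {C_set n j | j. (n - 1) div 2 \<le> j \<and> j \<le> n - 1})"
    (is "one_factorization n (?D \<union> ?C)")
proof -
  have three: "3 \<le> n" using odd_prime_ge_three[OF prime odd] .
  note coprime = coprime_below_prime[OF prime]
  define K where "K = ({1..(n - 1) div 2} \<times> {1..3::nat}) <+> {(n - 1) div 2..n - 1}"
  define p where "p = case_sum (\<lambda>(i, c). difference_involution n i c) (sum_class_involution n)"
  have finite: "finite K" unfolding K_def by simp
  have involutions: "fixpoint_free_involution n (p k)" if "k \<in> K" for k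
  proof (cases k)
    case (Inl ic)
    then obtain i c where "k = Inl (i, c)" "1 \<le> i" "i < n" "c \<in> {1, 2, 3}"
      using \<open>k \<in> K\<close> unfolding K_def by fastforce
    then show ?thesis
      using fixpoint_free_involution_difference[OF odd three coprime] unfolding p_def by simp
  next
    case Inr
    then show ?thesis using fixpoint_free_involution_sum_class three unfolding p_def by simp
  qed
  have image: "(\<lambda>k. involution_matching n (p k)) ` K = ?D \<union> ?C"
  proof -
    have "?D = (\<lambda>(i, c). difference_factor n i c) ` ({1..(n - 1) div 2} \<times> {1..3})"
      by fastforce
    moreover have "?C = C_set n ` {(n - 1) div 2..n - 1}"
      by auto
    ultimately show ?thesis
      using involution_matching_sum_class[of n] three
      unfolding K_def Plus_def image_Un image_image p_def difference_factor_def
      by (simp add: split_def)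
  qed
  have card: "card K = 2*n - 1"
    unfolding K_def by (rule card_factor_indices[OF odd])
  have cover: "K_edges n \<subseteq> \<Union> (?D \<union> ?C)"
    by (rule K_edges_subset_factors[OF prime odd])
  have "0 < n" using three by simp
  from one_factorization_of_involutions[of K n p, OF finite card this involutions]
  show ?thesis
    using cover unfolding image[symmetric] by blast
qed

lemma sum_indices_by_three:
  fixes n :: nat
  assumes "n mod 6 = 5"
  shows "{3*i + c - n - 3 | i c. (n + 1) div 2 \<le> i \<and> i \<le> (2*n - 1) div 3 \<and> 1 \<le> c \<and> c \<le> 3}
       = {(n - 1) div 2..n - 1}"
proof -
  have "\<exists>t. n = 6*t + 5" using assms by presburger
  then obtain t where n: "n = 6*t + 5" ..
  have bounds: "(n + 1) div 2 = 3*t + 3" "(2*n - 1) div 3 = 4*t + 3" "(n - 1) div 2 = 3*t + 2"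
    using n by simp_all
  show ?thesis
  proof (intro equalityI subsetI)
    fix j assume "j \<in> {3*i + c - n - 3 | i c. (n + 1) div 2 \<le> i \<and> i \<le> (2*n - 1) div 3 \<and> 1 \<le> c \<and> c \<le> 3}"
    then obtain i c where "j = 3*i + c - n - 3" "3*t + 3 \<le> i" "i \<le> 4*t + 3" "1 \<le> c" "c \<le> 3"
      unfolding bounds by blast
    then have "3*t + 2 \<le> j" "j \<le> 6*t + 4" unfolding n by linarith+
    then show "j \<in> {(n - 1) div 2..n - 1}" unfolding bounds n by simp
  next
    fix j assume "j \<in> {(n - 1) div 2..n - 1}"
    then have j: "3*t + 2 \<le> j" "j \<le> 6*t + 4" unfolding bounds n by auto
    define q r where "q = (j - (3*t + 2)) div 3" and "r = (j - (3*t + 2)) mod 3"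
    have qr: "j - (3*t + 2) = 3*q + r" "r < 3" unfolding q_def r_def by simp_all
    have "(n + 1) div 2 \<le> 3*t + 3 + q" "3*t + 3 + q \<le> (2*n - 1) div 3" "1 \<le> r + 1" "r + 1 \<le> 3"
      unfolding bounds using j qr n by linarith+
    moreover have "j = 3*(3*t + 3 + q) + (r + 1) - n - 3"
      using j(1) qr(1) n by simp
    ultimately show "j \<in> {3*i + c - n - 3 | i c. (n + 1) div 2 \<le> i \<and> i \<le> (2*n - 1) div 3 \<and> 1 \<le> c \<and> c \<le> 3}"
      by blast
  qed
qed

lemma regroup_by_three:
  fixes n :: nat and f :: "nat \<Rightarrow> nat \<Rightarrow> 'a" and g :: "nat \<Rightarrow> 'a"
  assumes "n mod 6 = 5"
  shows "{(if i \<le> (n - 1) div 2 then f i c else g (3*i + c - n - 3))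
            | i c. 1 \<le> i \<and> i \<le> (2*n - 1) div 3 \<and> 1 \<le> c \<and> c \<le> 3}
       = {f i c | i c. 1 \<le> i \<and> i \<le> (n - 1) div 2 \<and> 1 \<le> c \<and> c \<le> 3}
         \<union> {g j | j. (n - 1) div 2 \<le> j \<and> j \<le> n - 1}"
    (is "?R = ?F \<union> ?G")
proof -
  have half: "(n - 1) div 2 \<le> (2*n - 1) div 3" "(n + 1) div 2 = (n - 1) div 2 + 1"
    using assms by presburger+
  note indices = sum_indices_by_three[OF assms]
  show ?thesis
  proof (intro equalityI subsetI)
    fix e assume "e \<in> ?R"
    then obtain i c where e: "e = (if i \<le> (n - 1) div 2 then f i c else g (3*i + c - n - 3))"
      and ic: "1 \<le> i" "i \<le> (2*n - 1) div 3" "1 \<le> c" "c \<le> 3"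
      by blast
    show "e \<in> ?F \<union> ?G"
    proof (cases "i \<le> (n - 1) div 2")
      case True
      then have "e = f i c" using e by simp
      then show ?thesis using True ic by blast
    next
      case False
      then have "3*i + c - n - 3 \<in> {(n - 1) div 2..n - 1}"
        unfolding indices[symmetric] using ic half(2) by fastforce
      moreover have "e = g (3*i + c - n - 3)" using e False by simp
      ultimately show ?thesis by auto
    qed
  next
    fix e assume "e \<in> ?F \<union> ?G"
    then show "e \<in> ?R"
    proof
      assume "e \<in> ?F"
      then obtain i c where "e = f i c" "1 \<le> i" "i \<le> (n - 1) div 2" "1 \<le> c" "c \<le> 3"
        by blast
      moreover from this have "e = (if i \<le> (n - 1) div 2 then f i c else g (3*i + c - n - 3))"
        "i \<le> (2*n - 1) div 3"
        using half(1) by simp_all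
      ultimately show ?thesis by blast
    next
      assume "e \<in> ?G"
      then obtain j where "e = g j" "j \<in> {(n - 1) div 2..n - 1}" by auto
      then obtain i c where "e = g (3*i + c - n - 3)" "(n + 1) div 2 \<le> i" "i \<le> (2*n - 1) div 3"
        "1 \<le> c" "c \<le> 3"
        unfolding indices[symmetric] by blast
      moreover from this have "e = (if i \<le> (n - 1) div 2 then f i c else g (3*i + c - n - 3))"
        "1 \<le> i"
        using half(2) by simp_all
      ultimately show ?thesis by blast
    qed
  qed
qed

theorem lemma4:
  fixes n :: nat
  assumes "prime n" and "n mod 6 = 1 \<or> n mod 6 = 5"
  shows "\<exists>F. one_factorization n F \<and>
    (n mod 6 = 5 \<longrightarrow>
      (\<exists>R :: nat \<Rightarrow> nat \<Rightarrow> nat set set.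
         F = {R i j | i j. 1 \<le> i \<and> i \<le> (2*n - 1) div 3 \<and> 1 \<le> j \<and> j \<le> 3}
       \<and> (\<forall>i. 1 \<le> i \<and> i \<le> (n - 1) div 2 \<longrightarrow>
              R i 1 \<union> R i 2 \<union> R i 3 = A_set n i \<union> B_set n i \<union> C_set n (i - 1))
       \<and> (\<forall>i. (n + 1) div 2 \<le> i \<and> i \<le> (2*n - 1) div 3 \<longrightarrow>
              R i 1 = C_set n (3*i - n - 2) \<and> R i 2 = C_set n (3*i - n - 1)
              \<and> R i 3 = C_set n (3*i - n)))) \<and>
    (n mod 6 = 1 \<longrightarrow>
      (\<exists>R :: nat \<Rightarrow> nat \<Rightarrow> nat set set.
         F = {R i j | i j. 1 \<le> i \<and> i \<le> (n - 1) div 2 \<and> 1 \<le> j \<and> j \<le> 3}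
             \<union> {C_set n i | i. (n - 1) div 2 \<le> i \<and> i \<le> n - 1}
       \<and> (\<forall>i. 1 \<le> i \<and> i \<le> (n - 1) div 2 \<longrightarrow>
              R i 1 \<union> R i 2 \<union> R i 3 = A_set n i \<union> B_set n i \<union> C_set n (i - 1))))"
proof -
  have odd: "odd n" using assms(2) by presburger
  define R where "R i c = (if i \<le> (n - 1) div 2 then difference_factor n i c
    else C_set n (3*i + c - n - 3))" for i c
  let ?F = "{difference_factor n i c | i c. 1 \<le> i \<and> i \<le> (n - 1) div 2 \<and> 1 \<le> c \<and> c \<le> 3}
    \<union> {C_set n j | j. (n - 1) div 2 \<le> j \<and> j \<le> n - 1}"
  have "one_factorization n ?F"
    by (rule one_factorization_difference_and_sum_factors[OF assms(1) odd])
  moreover have "n mod 6 = 5 \<Longrightarrow>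
      ?F = {R i c | i c. 1 \<le> i \<and> i \<le> (2*n - 1) div 3 \<and> 1 \<le> c \<and> c \<le> 3}"
    unfolding R_def by (rule regroup_by_three[symmetric])
  moreover have "{R i c | i c. 1 \<le> i \<and> i \<le> (n - 1) div 2 \<and> 1 \<le> c \<and> c \<le> 3}
      = {difference_factor n i c | i c. 1 \<le> i \<and> i \<le> (n - 1) div 2 \<and> 1 \<le> c \<and> c \<le> 3}"
    unfolding R_def by (intro Collect_cong) auto
  moreover have "R i 1 \<union> R i 2 \<union> R i 3 = A_set n i \<union> B_set n i \<union> C_set n (i - 1)"
    if "1 \<le> i" "i \<le> (n - 1) div 2" for i
    using prime_difference_factors_union[OF assms(1) odd that] that unfolding R_def by simp
  moreover have "R i 1 = C_set n (3*i - n - 2) \<and> R i 2 = C_set n (3*i - n - 1) \<and> R i 3 = C_set n (3*i - n)"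
    if "(n + 1) div 2 \<le> i" for i
  proof -
    have "\<not> i \<le> (n - 1) div 2" using that odd by presburger
    then show ?thesis unfolding R_def by simp
  qed
  ultimately show ?thesis
    by (intro exI[of _ ?F] exI[of _ R] conjI impI allI) auto
qed

end
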